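(* Let $\mathfrak{g}_1,\mathfrak{g}_2$ be $S$-algebras and let $D$ be a derivation of $\mathfrak{g}_1\underline{\times}\mathfrak{g}_2$, with $D_{ij}=p_iDp_j$. If $D_{11}$ and $D_{22}$ are nilpotent derivations (of $\mathfrak{g}_1$, resp. $\mathfrak{g}_2$), then $D_{33}$ is a nilpotent endomorphism (of $\mathfrak{g}_3$).
   Context: All Lie algebras are finite-dimensional, complex, nilpotent and nonabelian. $C^1\mathfrak{g}=[\mathfrak{g},\mathfrak{g}]$. Product by generators: for $\mathfrak{g}_1,\mathfrak{g}_2$ of dimensions $m_1,m_2$ take bases $\{X_1,\dots,X_{m_1}\}$, $\{X'_1,\dots,X'_{m_2}\}$ such that $X_1,\dots,X_{n_1}$ generate $\mathfrak{g}_1$ and $X_{n_1+1},\dots,X_{m_1}$ span $C^1\mathfrak{g}_1$, and similarly for $\mathfrak{g}_2$ with $n_2$ generators. $\mathfrak{g}_1\underline{\times}\mathfrak{g}_2$ is the Lie algebra on $\mathfrak{g}_1\oplus\mathfrak{g}_2\oplus\mathfrak{g}_3$, $\mathfrak{g}_3=\langle Z_1,\dots,Z_{n_1n_2}\rangle$, with the brackets of $\mathfrak{g}_1$ and of $\mathfrak{g}_2$, $[X_i,X'_j]=Z_{(i-1)n_2+j}$ for $i\le n_1$, $j\le n_2$, $[X_i,X'_j]=0$ otherwise, and $\mathfrak{g}_3$ central. $p_i$ is the projection onto $\mathfrak{g}_i$. A nilpotent Lie algebra $\mathfrak{g}_1$ is an $S$-algebra if for every Lie algebra $\mathfrak{g}_2$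 and every derivation $D$ of $\mathfrak{g}_1\underline{\times}\mathfrak{g}_2$ one has $D_{21}(\mathfrak{g}_1)\subset C^1\mathfrak{g}_2$ (and symmetrically with the roles of the factors exchanged). *)

theory Defs
  imports Complex_Main
begin

text \<open>A Lie algebra of dimension m is given by structure constants
  c i j k (bracket of basis vectors e_i, e_j has k-th coordinate c i j k), indices 0..m-1.
  Vectors are functions nat => complex vanishing outside {0..<m}.
  Linear maps are matrices d k i (k-th output coordinate, i-th input coordinate).\<close>

type_synonym cvec = "nat \<Rightarrow> complex"
type_synonym sconst = "nat \<Rightarrow> nat \<Rightarrow> nat \<Rightarrow> complex"
type_synonym cmat = "nat \<Rightarrow> nat \<Rightarrow> complex"

definition vsp :: "nat \<Rightarrow> cvec set" where
  "vsp m = {x. \<forall>i\<ge>m. x i = 0}"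

definition vzero :: cvec where "vzero = (\<lambda>k. 0)"

definition vadd :: "cvec \<Rightarrow> cvec \<Rightarrow> cvec" where
  "vadd x y = (\<lambda>k. x k + y k)"

definition unitv :: "nat \<Rightarrow> cvec" where
  "unitv k = (\<lambda>i. if i = k then 1 else 0)"

definition cspan :: "cvec set \<Rightarrow> cvec set" where
  "cspan S = {v. \<exists>F a. finite F \<and> F \<subseteq> S \<and> v = (\<lambda>k. \<Sum>u\<in>F. a u * u k)}"

definition br :: "nat \<Rightarrow> sconst \<Rightarrow> cvec \<Rightarrow> cvec \<Rightarrow> cvec" where
  "br m c x y = (\<lambda>k. if k < m then (\<Sum>i<m. \<Sum>j<m. x i * y j * c i j k) else 0)"

text \<open>Lower central series: lcs 0 = g, lcs (k+1) = [g, lcs k]; so lcs 1 = C^1 g = [g,g].\<close>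
primrec lcs :: "nat \<Rightarrow> sconst \<Rightarrow> nat \<Rightarrow> cvec set" where
  "lcs m c 0 = vsp m"
| "lcs m c (Suc k) = cspan {br m c x y | x y. x \<in> vsp m \<and> y \<in> lcs m c k}"

definition is_lie :: "nat \<Rightarrow> sconst \<Rightarrow> bool" where
  "is_lie m c \<longleftrightarrow>
     (\<forall>x\<in>vsp m. br m c x x = vzero) \<and>
     (\<forall>x\<in>vsp m. \<forall>y\<in>vsp m. \<forall>z\<in>vsp m.
        vadd (vadd (br m c x (br m c y z)) (br m c y (br m c z x))) (br m c z (br m c x y)) = vzero)"

definition nilpotent_lie :: "nat \<Rightarrow> sconst \<Rightarrow> bool" where
  "nilpotent_lie m c \<longleftrightarrow> (\<exists>k. lcs m c k = {vzero})"

definition nonabelian :: "nat \<Rightarrow> sconst \<Rightarrow> bool" where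
  "nonabelian m c \<longleftrightarrow> (\<exists>x\<in>vsp m. \<exists>y\<in>vsp m. br m c x y \<noteq> vzero)"

text \<open>Adapted basis: e_0..e_{n-1} are the generators, e_n..e_{m-1} span C^1 g.\<close>
definition adapted :: "nat \<Rightarrow> nat \<Rightarrow> sconst \<Rightarrow> bool" where
  "adapted m n c \<longleftrightarrow> n \<le> m \<and> lcs m c 1 = cspan (unitv ` {n..<m})"

definition NLA :: "nat \<Rightarrow> nat \<Rightarrow> sconst \<Rightarrow> bool" where
  "NLA m n c \<longleftrightarrow> is_lie m c \<and> nilpotent_lie m c \<and> nonabelian m c \<and> adapted m n c"

text \<open>Product by generators g1 x g2: coordinates 0..m1-1 for g1, m1..m1+m2-1 for g2,
  m1+m2+(i*n2+j) for Z corresponding to [X_i, X'_j] (0-indexed).\<close>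
definition pdim :: "nat \<Rightarrow> nat \<Rightarrow> nat \<Rightarrow> nat \<Rightarrow> nat" where
  "pdim m1 n1 m2 n2 = m1 + m2 + n1 * n2"

definition prod_c :: "nat \<Rightarrow> nat \<Rightarrow> sconst \<Rightarrow> nat \<Rightarrow> nat \<Rightarrow> sconst \<Rightarrow> sconst" where
  "prod_c m1 n1 c1 m2 n2 c2 = (\<lambda>i j k.
     if i < m1 \<and> j < m1 \<and> k < m1 then c1 i j k
     else if m1 \<le> i \<and> i < m1 + m2 \<and> m1 \<le> j \<and> j < m1 + m2 \<and> m1 \<le> k \<and> k < m1 + m2
       then c2 (i - m1) (j - m1) (k - m1)
     else if i < n1 \<and> m1 \<le> j \<and> j < m1 + n2 \<and> k = m1 + m2 + i * n2 + (j - m1) then 1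
     else if j < n1 \<and> m1 \<le> i \<and> i < m1 + n2 \<and> k = m1 + m2 + j * n2 + (i - m1) then -1
     else 0)"

definition mapp :: "nat \<Rightarrow> nat \<Rightarrow> cmat \<Rightarrow> cvec \<Rightarrow> cvec" where
  "mapp rows cols d x = (\<lambda>k. if k < rows then (\<Sum>i<cols. d k i * x i) else 0)"

definition blk :: "cmat \<Rightarrow> nat \<Rightarrow> nat \<Rightarrow> cmat" where
  "blk d r s = (\<lambda>k i. d (r + k) (s + i))"

definition is_der :: "nat \<Rightarrow> sconst \<Rightarrow> cmat \<Rightarrow> bool" where
  "is_der m c d \<longleftrightarrow> (\<forall>x\<in>vsp m. \<forall>y\<in>vsp m.
     mapp m m d (br m c x y) = vadd (br m c (mapp m m d x) y) (br m c x (mapp m m d y)))"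

definition nilp_map :: "nat \<Rightarrow> (cvec \<Rightarrow> cvec) \<Rightarrow> bool" where
  "nilp_map m f \<longleftrightarrow> (\<exists>k. \<forall>x\<in>vsp m. (f ^^ k) x = vzero)"

text \<open>S-algebra: for every g2 and every derivation D of g1 x g2, D21(g1) \<subseteq> C^1 g2;
  and symmetrically, for every derivation D of g2 x g1, D12(g1) \<subseteq> C^1 g2.\<close>
definition S_alg :: "nat \<Rightarrow> nat \<Rightarrow> sconst \<Rightarrow> bool" where
  "S_alg m1 n1 c1 \<longleftrightarrow> (\<forall>m2 n2 c2 d. NLA m2 n2 c2 \<longrightarrow>
     (is_der (pdim m1 n1 m2 n2) (prod_c m1 n1 c1 m2 n2 c2) d \<longrightarrow>
        (\<forall>x\<in>vsp m1. mapp m2 m1 (blk d m1 0) x \<in> lcs m2 c2 1)) \<and>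
     (is_der (pdim m2 n2 m1 n1) (prod_c m2 n2 c2 m1 n1 c1) d \<longrightarrow>
        (\<forall>x\<in>vsp m1. mapp m2 m1 (blk d 0 m2) x \<in> lcs m2 c2 1)))"

end

theory Submission
  imports Defs "HOL-Library.Function_Algebras"
begin

text \<open>Applying \<open>D\<close> to \<open>Z_(i,j) = [X_i, X'_j]\<close> and reading off \<open>\<g>\<^sub>3\<close>-coordinates, only the
  generator components of \<open>D X_i\<close> and \<open>D X'_j\<close> contribute, so \<open>D\<^sub>3\<^sub>3 = A \<otimes> 1 + 1 \<otimes> B\<close>,
  where \<open>A\<close> and \<open>B\<close> are the generator blocks of \<open>D\<^sub>1\<^sub>1\<close> and \<open>D\<^sub>2\<^sub>2\<close>. A derivation preserves
  \<open>C\<^sup>1\<g>\<close>, so \<open>A\<close> and \<open>B\<close> are the maps induced on \<open>\<g>\<^sub>i / C\<^sup>1\<g>\<^sub>i\<close> and hence nilpotent.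
  The summands \<open>A \<otimes> 1\<close> and \<open>1 \<otimes> B\<close> commute, so \<open>D\<^sub>3\<^sub>3\<close> is nilpotent.\<close>

lemma vzero_eq_zero: "vzero = 0"
  by (simp add: vzero_def fun_eq_iff)

lemma unitv_in_vsp: "i < m \<Longrightarrow> unitv i \<in> vsp m"
  by (simp add: unitv_def vsp_def)

lemma mapp_in_vsp: "mapp r c D x \<in> vsp r"
  by (simp add: mapp_def vsp_def)

lemma mapp_unitv: "i < c \<Longrightarrow> mapp r c D (unitv i) k = (if k < r then D k i else 0)"
  by (simp add: mapp_def unitv_def if_distrib cong: if_cong)

lemma unitv_mult: "unitv p i * a = (if i = p then a else 0)"
  by (simp add: unitv_def)

lemma mult_unitv: "a * unitv p i = (if i = p then a else 0)"
  by (simp add: unitv_def)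

lemma br_unitv_left:
  "p < m \<Longrightarrow> br m c (unitv p) y k = (if k < m then (\<Sum>j<m. y j * c p j k) else 0)"
  unfolding br_def by (subst sum.swap) (simp add: unitv_mult if_distrib[where f="\<lambda>u. u * _"] cong: if_cong)

lemma br_unitv_right:
  "q < m \<Longrightarrow> br m c x (unitv q) k = (if k < m then (\<Sum>i<m. x i * c i q k) else 0)"
  by (simp add: br_def mult_unitv if_distrib[where f="\<lambda>u. u * _"] cong: if_cong)

lemma br_unitv_unitv:
  "p < m \<Longrightarrow> q < m \<Longrightarrow> br m c (unitv p) (unitv q) k = (if k < m then c p q k else 0)"
  by (simp add: br_unitv_left unitv_mult if_distrib[where f="\<lambda>u. u * _"] cong: if_cong)

lemma in_cspan: "v \<in> S \<Longrightarrow> v \<in> cspan S"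
  unfolding cspan_def by (rule CollectI, rule exI[of _ "{v}"], rule exI[of _ "\<lambda>_. 1"]) auto

lemma cspan_unitv_coord: "v \<in> cspan (unitv ` {n..<m}) \<Longrightarrow> k < n \<Longrightarrow> v k = 0"
  unfolding cspan_def by (auto simp: unitv_def intro!: sum.neutral)

lemma mapp_cspan_coord:
  assumes "v \<in> cspan S" and "k < r" and "\<And>u. u \<in> S \<Longrightarrow> mapp r c D u k = 0"
  shows "mapp r c D v k = 0"
proof -
  obtain F a where "finite F" "F \<subseteq> S" and "v = (\<lambda>k. \<Sum>u\<in>F. a u * u k)"
    using assms(1) unfolding cspan_def by blast
  then have "mapp r c D v k = (\<Sum>u\<in>F. a u * mapp r c D u k)"
    using \<open>k < r\<close> by (simp add: mapp_def sum_distrib_left sum.swap[of _ F] mult.left_commute)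
  also have "\<dots> = 0"
    using \<open>F \<subseteq> S\<close> assms(3) by (auto intro!: sum.neutral)
  finally show ?thesis .
qed

lemma br_in_lcs_1: "x \<in> vsp m \<Longrightarrow> y \<in> vsp m \<Longrightarrow> br m c x y \<in> lcs m c 1"
  by (auto intro: in_cspan)

lemma adapted_der_entry_eq_0:
  assumes "adapted m n c" and der: "is_der m c D" and "k < n" "n \<le> i" "i < m"
  shows "D k i = 0"
proof -
  have C1: "lcs m c 1 = cspan (unitv ` {n..<m})" and "k < m"
    using assms by (auto simp: adapted_def)
  have C1_coord: "v k = 0" if "v \<in> lcs m c 1" for v
    using that cspan_unitv_coord \<open>k < n\<close> unfolding C1 by blast
  have "unitv i \<in> lcs m c 1"
    unfolding C1 using \<open>n \<le> i\<close> \<open>i < m\<close> by (auto intro: in_cspan)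
  then have "unitv i \<in> cspan {br m c x y | x y. x \<in> vsp m \<and> y \<in> vsp m}"
    by simp
  then have "mapp m m D (unitv i) k = 0"
  proof (rule mapp_cspan_coord[OF _ \<open>k < m\<close>])
    fix u assume "u \<in> {br m c x y | x y. x \<in> vsp m \<and> y \<in> vsp m}"
    then obtain x y where "x \<in> vsp m" "y \<in> vsp m" and "u = br m c x y"
      by blast
    then have "mapp m m D u = vadd (br m c (mapp m m D x) y) (br m c x (mapp m m D y))"
      using der by (simp add: is_der_def)
    moreover have "br m c (mapp m m D x) y k = 0" "br m c x (mapp m m D y) k = 0"
      using C1_coord br_in_lcs_1 mapp_in_vsp \<open>x \<in> vsp m\<close> \<open>y \<in> vsp m\<close> by blast+
    ultimately show "mapp m m D u k = 0"
      by (simp add: vadd_def)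
  qed
  then show ?thesis
    using \<open>i < m\<close> \<open>k < m\<close> by (simp add: mapp_unitv)
qed

lemma nilp_map_leading_block:
  assumes "n \<le> m" and upper: "\<And>k i. k < n \<Longrightarrow> n \<le> i \<Longrightarrow> i < m \<Longrightarrow> D k i = 0"
    and "nilp_map m (mapp m m D)"
  shows "nilp_map n (mapp n n D)"
proof -
  define trunc :: "cvec \<Rightarrow> cvec" where "trunc y = (\<lambda>k. if k < n then y k else 0)" for y
  have trunc_mapp: "trunc (mapp m m D y) = mapp n n D (trunc y)" for y
  proof
    fix k
    show "trunc (mapp m m D y) k = mapp n n D (trunc y) k"
    proof (cases "k < n")
      case True
      have "(\<Sum>i<m. D k i * y i) = (\<Sum>i<n. D k i * y i)"
        using \<open>n \<le> m\<close> upper[OF True] by (intro sum.mono_neutral_right) auto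
      then show ?thesis
        using True \<open>n \<le> m\<close> by (simp add: trunc_def mapp_def)
    qed (simp add: trunc_def mapp_def)
  qed
  have trunc_funpow: "trunc ((mapp m m D ^^ j) y) = (mapp n n D ^^ j) (trunc y)" for j y
    by (induction j) (simp_all add: trunc_mapp)
  obtain K where K: "\<forall>x\<in>vsp m. (mapp m m D ^^ K) x = vzero"
    using assms(3) by (auto simp: nilp_map_def)
  have "(mapp n n D ^^ K) z = vzero" if "z \<in> vsp n" for z
  proof -
    have "z \<in> vsp m" and "trunc z = z"
      using that \<open>n \<le> m\<close> by (auto simp: trunc_def vsp_def)
    then show ?thesis
      using trunc_funpow[of K z] K by (simp add: trunc_def vzero_def)
  qed
  then show ?thesis
    by (auto simp: nilp_map_def)
qed

lemma additive_funpow: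
  fixes f :: "'a::ab_group_add \<Rightarrow> 'a"
  shows "additive f \<Longrightarrow> additive (f ^^ n)"
  by (induction n) (simp_all add: additive_def)

lemma additive_add: "additive f \<Longrightarrow> additive g \<Longrightarrow> additive (\<lambda>x. f x + g x)"
  by (simp add: additive_def algebra_simps)

lemma funpow_commute_left: "(\<And>x. f (g x) = g (f x)) \<Longrightarrow> (g ^^ n) (f x) = f ((g ^^ n) x)"
  by (induction n) simp_all

lemma commuting_additive_funpow_add_eq_0:
  fixes f g :: "'a::ab_group_add \<Rightarrow> 'a"
  assumes f: "additive f" and g: "additive g" and comm: "\<And>x. f (g x) = g (f x)"
  shows "(f ^^ a) x = 0 \<Longrightarrow> (g ^^ b) x = 0 \<Longrightarrow> a + b \<le> n \<Longrightarrow> ((\<lambda>x. f x + g x) ^^ n) x = 0"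
proof (induction n arbitrary: a b x)
  case 0
  then show ?case by simp
next
  case (Suc n)
  define h where "h = (\<lambda>x. f x + g x)"
  have h_pow: "additive (h ^^ k)" for k
    unfolding h_def by (intro additive_funpow additive_add f g)
  show ?case
  proof (cases "a = 0 \<or> b = 0")
    case True
    then have "x = 0" using Suc.prems by auto
    then show ?thesis using additive.zero[OF h_pow] unfolding h_def by blast
  next
    case False
    then obtain a' b' where ab: "a = Suc a'" "b = Suc b'"
      by (cases a; cases b) auto
    have "(f ^^ a') (f x) = 0"
      using Suc.prems(1) ab by (simp add: funpow_Suc_right del: funpow.simps)
    moreover have "(g ^^ b) (f x) = 0"
      using Suc.prems(2) funpow_commute_left[of f g, OF comm] additive.zero[OF f] by simp
    ultimately have fx: "(h ^^ n) (f x) = 0"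
      using Suc.IH[of a' "f x" b] Suc.prems(3) ab unfolding h_def by simp
    have "(f ^^ a) (g x) = 0"
      using Suc.prems(1) funpow_commute_left[of g f, OF comm[symmetric]] additive.zero[OF g] by simp
    moreover have "(g ^^ b') (g x) = 0"
      using Suc.prems(2) ab by (simp add: funpow_Suc_right del: funpow.simps)
    ultimately have gx: "(h ^^ n) (g x) = 0"
      using Suc.IH[of a "g x" b'] Suc.prems(3) ab unfolding h_def by simp
    have "(h ^^ Suc n) x = (h ^^ n) (f x + g x)"
      by (simp add: funpow_Suc_right h_def del: funpow.simps)
    also have "\<dots> = 0"
      using fx gx by (simp add: additive.add[OF h_pow])
    finally show ?thesis
      unfolding h_def .
  qed
qed

lemma nilp_map_add_commuting:
  assumes "additive f" "additive g" "\<And>x. f (g x) = g (f x)"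
    and "nilp_map m f" "nilp_map m g"
  shows "nilp_map m (\<lambda>x. f x + g x)"
proof -
  obtain a b where "\<forall>x\<in>vsp m. (f ^^ a) x = 0" "\<forall>x\<in>vsp m. (g ^^ b) x = 0"
    using assms(4,5) by (auto simp: nilp_map_def vzero_eq_zero)
  then have "\<forall>x\<in>vsp m. ((\<lambda>x. f x + g x) ^^ (a + b)) x = 0"
    using commuting_additive_funpow_add_eq_0[OF assms(1-3)] by blast
  then show ?thesis
    by (auto simp: nilp_map_def vzero_eq_zero)
qed

lemma linear_index_less: "(i::nat) < n1 \<Longrightarrow> j < n2 \<Longrightarrow> i * n2 + j < n1 * n2"
proof -
  assume "i < n1" "j < n2"
  then have "i * n2 + j < Suc i * n2" by simp
  also have "\<dots> \<le> n1 * n2" using \<open>i < n1\<close> by (intro mult_le_mono1) simp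
  finally show ?thesis .
qed

lemma linear_index_div_mod_less:
  fixes k :: nat
  assumes "k < n1 * n2"
  shows "k div n2 < n1" and "k mod n2 < n2"
  using assms by (cases n2; simp add: less_mult_imp_div_less)+

lemma sum_lessThan_mult:
  fixes f :: "nat \<Rightarrow> 'a::comm_monoid_add"
  shows "(\<Sum>k<n1 * n2. f k) = (\<Sum>i<n1. \<Sum>j<n2. f (i * n2 + j))"
proof -
  have "(\<Sum>k<n1 * n2. f k) = (\<Sum>i<n1. sum f {i * n2..<i * n2 + n2})"
    using sum.nat_group[of f n2 n1] by simp
  also have "\<dots> = (\<Sum>i<n1. \<Sum>j<n2. f (i * n2 + j))"
    by (simp add: sum.shift_bounds_nat_ivl[of f 0 "i * n2" n2 for i, simplified] atLeast0LessThan
        add.commute)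
  finally show ?thesis .
qed

lemma mapp_cong: "(\<And>k i. k < r \<Longrightarrow> i < c \<Longrightarrow> E k i = F k i) \<Longrightarrow> mapp r c E = mapp r c F"
  by (simp add: mapp_def fun_eq_iff)

lemma mapp_matrix_add: "mapp r c (\<lambda>k i. E k i + F k i) = (\<lambda>x. mapp r c E x + mapp r c F x)"
  by (simp add: mapp_def fun_eq_iff distrib_right sum.distrib)

lemma additive_mapp: "additive (mapp r c E)"
  by (simp add: additive_def mapp_def fun_eq_iff distrib_left sum.distrib)

text \<open>Coordinate \<open>i * n2 + j\<close> of \<open>\<complex>^(n1 * n2)\<close> stands for \<open>Z_(i,j) = [X_i, X'_j]\<close>;
  \<open>tensor_id n2 A\<close> is the matrix of \<open>A \<otimes> 1\<close> and \<open>id_tensor n2 B\<close> that of \<open>1 \<otimes> B\<close>.\<close>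

definition tensor_id :: "nat \<Rightarrow> cmat \<Rightarrow> cmat" where
  "tensor_id n2 A = (\<lambda>k k'. if k mod n2 = k' mod n2 then A (k div n2) (k' div n2) else 0)"

definition id_tensor :: "nat \<Rightarrow> cmat \<Rightarrow> cmat" where
  "id_tensor n2 B = (\<lambda>k k'. if k div n2 = k' div n2 then B (k mod n2) (k' mod n2) else 0)"

lemma mapp_tensor_id:
  assumes "k < n1 * n2"
  shows "mapp (n1 * n2) (n1 * n2) (tensor_id n2 A) x k =
    (\<Sum>i<n1. A (k div n2) i * x (i * n2 + k mod n2))"
  using assms linear_index_div_mod_less[OF assms]
  by (simp add: mapp_def sum_lessThan_mult tensor_id_def if_distrib[where f="\<lambda>u. u * _"]
      cong: if_cong)

lemma mapp_id_tensor:
  assumes "k < n1 * n2"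
  shows "mapp (n1 * n2) (n1 * n2) (id_tensor n2 B) x k =
    (\<Sum>j<n2. B (k mod n2) j * x (k div n2 * n2 + j))"
  using assms linear_index_div_mod_less[OF assms]
  by (simp add: mapp_def sum_lessThan_mult id_tensor_def if_distrib[where f="\<lambda>u. u * _"]
      cong: if_cong) (subst sum.swap, simp)

lemma mapp_tensor_id_id_tensor_commute:
  "mapp (n1 * n2) (n1 * n2) (tensor_id n2 A) (mapp (n1 * n2) (n1 * n2) (id_tensor n2 B) x) =
   mapp (n1 * n2) (n1 * n2) (id_tensor n2 B) (mapp (n1 * n2) (n1 * n2) (tensor_id n2 A) x)"
  (is "?AB x = ?BA x")
proof
  fix k
  show "?AB x k = ?BA x k"
  proof (cases "k < n1 * n2")
    case True
    note linear_index_div_mod_less[OF True]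
    have "?AB x k = (\<Sum>i<n1. A (k div n2) i * (\<Sum>j<n2. B (k mod n2) j * x (i * n2 + j)))"
      using True \<open>k mod n2 < n2\<close>
      by (auto simp: mapp_tensor_id mapp_id_tensor linear_index_less intro!: sum.cong)
    also have "\<dots> = (\<Sum>j<n2. B (k mod n2) j * (\<Sum>i<n1. A (k div n2) i * x (i * n2 + j)))"
      by (simp add: sum_distrib_left sum.swap[of _ "{..<n1}"] mult.left_commute)
    also have "\<dots> = ?BA x k"
      using True \<open>k div n2 < n1\<close>
      by (auto simp: mapp_tensor_id mapp_id_tensor linear_index_less intro!: sum.cong)
    finally show ?thesis .
  qed (simp add: mapp_def)
qed

lemma vsp_mult_eq_zeroI:
  assumes "y \<in> vsp (n1 * n2)" and "\<And>i j. i < n1 \<Longrightarrow> j < n2 \<Longrightarrow> y (i * n2 + j) = 0"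
  shows "y = 0"
proof
  fix k
  show "y k = 0 k"
  proof (cases "k < n1 * n2")
    case True
    then show ?thesis
      using linear_index_div_mod_less[OF True] assms(2)[of "k div n2" "k mod n2"] by simp
  qed (use assms(1) in \<open>simp add: vsp_def\<close>)
qed

lemma funpow_in_vsp: "x \<in> vsp r \<Longrightarrow> (mapp r c E ^^ t) x \<in> vsp r"
  by (cases t) (simp_all add: mapp_in_vsp)

lemma nilp_map_tensor_id:
  assumes "nilp_map n1 (mapp n1 n1 A)"
  shows "nilp_map (n1 * n2) (mapp (n1 * n2) (n1 * n2) (tensor_id n2 A))"
proof -
  let ?T = "mapp (n1 * n2) (n1 * n2) (tensor_id n2 A)"
  obtain a where a: "\<forall>x\<in>vsp n1. (mapp n1 n1 A ^^ a) x = 0"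
    using assms by (auto simp: nilp_map_def vzero_eq_zero)
  define col :: "nat \<Rightarrow> cvec \<Rightarrow> cvec"
    where "col j x = (\<lambda>i. if i < n1 then x (i * n2 + j) else 0)" for j x
  have col_T: "col j (?T x) = mapp n1 n1 A (col j x)" if "j < n2" for j x
  proof
    fix i
    show "col j (?T x) i = mapp n1 n1 A (col j x) i"
      using that by (simp add: col_def mapp_tensor_id linear_index_less) (simp add: mapp_def)
  qed
  have col_pow: "col j ((?T ^^ t) x) = (mapp n1 n1 A ^^ t) (col j x)" if "j < n2" for j t x
    by (induction t) (simp_all add: col_T[OF that])
  have "(?T ^^ a) x = 0" if "x \<in> vsp (n1 * n2)" for x
  proof (rule vsp_mult_eq_zeroI[OF funpow_in_vsp[OF that]])
    fix i j assume "i < n1" "j < n2"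
    have "col j x \<in> vsp n1"
      by (simp add: col_def vsp_def)
    then have "col j ((?T ^^ a) x) i = 0"
      using col_pow[OF \<open>j < n2\<close>] a by simp
    then show "(?T ^^ a) x (i * n2 + j) = 0"
      using \<open>i < n1\<close> by (simp add: col_def)
  qed
  then show ?thesis
    by (auto simp: nilp_map_def vzero_eq_zero)
qed

lemma nilp_map_id_tensor:
  assumes "nilp_map n2 (mapp n2 n2 B)"
  shows "nilp_map (n1 * n2) (mapp (n1 * n2) (n1 * n2) (id_tensor n2 B))"
proof -
  let ?T = "mapp (n1 * n2) (n1 * n2) (id_tensor n2 B)"
  obtain b where b: "\<forall>x\<in>vsp n2. (mapp n2 n2 B ^^ b) x = 0"
    using assms by (auto simp: nilp_map_def vzero_eq_zero)
  define row :: "nat \<Rightarrow> cvec \<Rightarrow> cvec"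
    where "row i x = (\<lambda>j. if j < n2 then x (i * n2 + j) else 0)" for i x
  have row_T: "row i (?T x) = mapp n2 n2 B (row i x)" if "i < n1" for i x
  proof
    fix j
    show "row i (?T x) j = mapp n2 n2 B (row i x) j"
      using that by (simp add: row_def mapp_id_tensor linear_index_less) (simp add: mapp_def)
  qed
  have row_pow: "row i ((?T ^^ t) x) = (mapp n2 n2 B ^^ t) (row i x)" if "i < n1" for i t x
    by (induction t) (simp_all add: row_T[OF that])
  have "(?T ^^ b) x = 0" if "x \<in> vsp (n1 * n2)" for x
  proof (rule vsp_mult_eq_zeroI[OF funpow_in_vsp[OF that]])
    fix i j assume "i < n1" "j < n2"
    have "row i x \<in> vsp n2"
      by (simp add: row_def vsp_def)
    then have "row i ((?T ^^ b) x) j = 0"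
      using row_pow[OF \<open>i < n1\<close>] b by simp
    then show "(?T ^^ b) x (i * n2 + j) = 0"
      using \<open>j < n2\<close> by (simp add: row_def)
  qed
  then show ?thesis
    by (auto simp: nilp_map_def vzero_eq_zero)
qed

lemma prod_br_generators:
  assumes "i < n1" "j < n2" "n1 \<le> m1"
  shows "br (pdim m1 n1 m2 n2) (prod_c m1 n1 c1 m2 n2 c2) (unitv i) (unitv (m1 + j)) =
    unitv (m1 + m2 + (i * n2 + j))"
proof
  fix k
  have "i * n2 + j < n1 * n2"
    using assms by (simp add: linear_index_less)
  then have "i < pdim m1 n1 m2 n2" "m1 + j < pdim m1 n1 m2 n2"
    using assms by (simp_all add: pdim_def)
  then show "br (pdim m1 n1 m2 n2) (prod_c m1 n1 c1 m2 n2 c2) (unitv i) (unitv (m1 + j)) k =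
      unitv (m1 + m2 + (i * n2 + j)) k"
    using assms \<open>i * n2 + j < n1 * n2\<close>
    by (simp add: br_unitv_unitv) (auto simp: pdim_def prod_c_def unitv_def)
qed

lemma prod_br_central_coord_right:
  assumes "j < n2" "n1 \<le> m1" "n2 \<le> m2" "k < n1 * n2"
  shows "br (pdim m1 n1 m2 n2) (prod_c m1 n1 c1 m2 n2 c2) x (unitv (m1 + j)) (m1 + m2 + k) =
    (if k mod n2 = j then x (k div n2) else 0)"
proof -
  have coeff: "prod_c m1 n1 c1 m2 n2 c2 i (m1 + j) (m1 + m2 + k) =
      (if i = k div n2 \<and> k mod n2 = j then 1 else 0)" for i
    using assms linear_index_div_mod_less[OF assms(4)] by (auto simp: prod_c_def)
  show ?thesis
    using assms linear_index_div_mod_less[OF assms(4)]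
    by (simp add: br_unitv_right pdim_def coeff if_distrib[where f="\<lambda>u. _ * u"] cong: if_cong)
qed

lemma prod_br_central_coord_left:
  assumes "i < n1" "n1 \<le> m1" "n2 \<le> m2" "k < n1 * n2"
  shows "br (pdim m1 n1 m2 n2) (prod_c m1 n1 c1 m2 n2 c2) (unitv i) y (m1 + m2 + k) =
    (if k div n2 = i then y (m1 + k mod n2) else 0)"
proof -
  have coeff: "prod_c m1 n1 c1 m2 n2 c2 i b (m1 + m2 + k) =
      (if b = m1 + k mod n2 \<and> k div n2 = i then 1 else 0)" for b
  proof (cases "m1 \<le> b \<and> b < m1 + n2")
    case True
    then obtain j where b: "b = m1 + j" and "j < n2"
      using le_Suc_ex by force
    then have "k = i * n2 + j \<longleftrightarrow> i = k div n2 \<and> j = k mod n2"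
      by auto
    then show ?thesis
      using assms b \<open>j < n2\<close> by (auto simp: prod_c_def)
  next
    case False
    then show ?thesis
      using assms linear_index_div_mod_less[OF assms(4)] by (auto simp: prod_c_def)
  qed
  show ?thesis
    using assms linear_index_div_mod_less[OF assms(4)]
    by (simp add: br_unitv_left pdim_def coeff if_distrib[where f="\<lambda>u. _ * u"] cong: if_cong)
qed

lemma prod_der_central_entry:
  assumes "n1 \<le> m1" "n2 \<le> m2"
    and der: "is_der (pdim m1 n1 m2 n2) (prod_c m1 n1 c1 m2 n2 c2) d"
    and "k < n1 * n2" "k' < n1 * n2"
  shows "d (m1 + m2 + k) (m1 + m2 + k') =
    tensor_id n2 (blk d 0 0) k k' + id_tensor n2 (blk d m1 m1) k k'"
proof -
  let ?P = "pdim m1 n1 m2 n2" and ?C = "prod_c m1 n1 c1 m2 n2 c2"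
  define i' j' where "i' = k' div n2" and "j' = k' mod n2"
  have "i' < n1" "j' < n2"
    using linear_index_div_mod_less[OF \<open>k' < n1 * n2\<close>] by (simp_all add: i'_def j'_def)
  have "k' = i' * n2 + j'"
    by (simp add: i'_def j'_def)
  have in_range: "i' < ?P" "m1 + j' < ?P" "m1 + m2 + k < ?P" "m1 + m2 + k' < ?P"
    "k div n2 < ?P" "m1 + k mod n2 < ?P"
    using \<open>i' < n1\<close> \<open>j' < n2\<close> assms linear_index_div_mod_less[OF \<open>k < n1 * n2\<close>]
    unfolding pdim_def by linarith+
  have "d (m1 + m2 + k) (m1 + m2 + k') = mapp ?P ?P d (unitv (m1 + m2 + k')) (m1 + m2 + k)"
    using in_range by (simp add: mapp_unitv)
  also have "\<dots> = mapp ?P ?P d (br ?P ?C (unitv i') (unitv (m1 + j'))) (m1 + m2 + k)"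
    using \<open>i' < n1\<close> \<open>j' < n2\<close> assms(1) by (simp add: prod_br_generators \<open>k' = i' * n2 + j'\<close>)
  also have "\<dots> = br ?P ?C (mapp ?P ?P d (unitv i')) (unitv (m1 + j')) (m1 + m2 + k) +
      br ?P ?C (unitv i') (mapp ?P ?P d (unitv (m1 + j'))) (m1 + m2 + k)"
    using der in_range by (simp add: is_der_def unitv_in_vsp vadd_def)
  also have "\<dots> = (if k mod n2 = j' then d (k div n2) i' else 0) +
      (if k div n2 = i' then d (m1 + k mod n2) (m1 + j') else 0)"
    using \<open>i' < n1\<close> \<open>j' < n2\<close> assms in_range
    by (simp add: prod_br_central_coord_left prod_br_central_coord_right mapp_unitv)
  also have "\<dots> = tensor_id n2 (blk d 0 0) k k' + id_tensor n2 (blk d m1 m1) k k'"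
    by (simp add: tensor_id_def id_tensor_def blk_def i'_def j'_def)
  finally show ?thesis .
qed

theorem mainTheorem10:
  fixes m1 n1 m2 n2 :: nat and c1 c2 :: sconst and d :: cmat
  assumes "NLA m1 n1 c1" and "NLA m2 n2 c2"
    and "S_alg m1 n1 c1" and "S_alg m2 n2 c2"
    and "is_der (pdim m1 n1 m2 n2) (prod_c m1 n1 c1 m2 n2 c2) d"
    and "is_der m1 c1 (blk d 0 0)" and "nilp_map m1 (mapp m1 m1 (blk d 0 0))"
    and "is_der m2 c2 (blk d m1 m1)" and "nilp_map m2 (mapp m2 m2 (blk d m1 m1))"
  shows "nilp_map (n1 * n2) (mapp (n1 * n2) (n1 * n2) (blk d (m1 + m2) (m1 + m2)))"
proof -
  let ?N = "n1 * n2" and ?A = "blk d 0 0" and ?B = "blk d m1 m1"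
  have adapted: "adapted m1 n1 c1" "adapted m2 n2 c2" and "n1 \<le> m1" "n2 \<le> m2"
    using assms(1,2) by (simp_all add: NLA_def adapted_def)
  have "nilp_map n1 (mapp n1 n1 ?A)"
    using nilp_map_leading_block[OF \<open>n1 \<le> m1\<close> adapted_der_entry_eq_0[OF adapted(1) assms(6)]
        assms(7)] .
  moreover have "nilp_map n2 (mapp n2 n2 ?B)"
    using nilp_map_leading_block[OF \<open>n2 \<le> m2\<close> adapted_der_entry_eq_0[OF adapted(2) assms(8)]
        assms(9)] .
  ultimately have
    "nilp_map ?N (\<lambda>x. mapp ?N ?N (tensor_id n2 ?A) x + mapp ?N ?N (id_tensor n2 ?B) x)"
    by (intro nilp_map_add_commuting additive_mapp mapp_tensor_id_id_tensor_commute
        nilp_map_tensor_id nilp_map_id_tensor)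
  moreover have "mapp ?N ?N (blk d (m1 + m2) (m1 + m2)) =
      mapp ?N ?N (\<lambda>k k'. tensor_id n2 ?A k k' + id_tensor n2 ?B k k')"
    using prod_der_central_entry[OF \<open>n1 \<le> m1\<close> \<open>n2 \<le> m2\<close> assms(5)]
    by (intro mapp_cong) (simp add: blk_def)
  ultimately show ?thesis
    by (simp add: mapp_matrix_add)
qed

end
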